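(* Let $w$ and $w'$ be binary words. If $G(w)$ is not an identity permutation, then $G(w')$ contains $G(w)$ as a pattern if and only if $w'$ contains $w$ as a (not necessarily contiguous) subsequence. If $G(w)$ is the identity permutation $\operatorname{id}_k = 12\cdots k$ of size $k$, then $G(w')$ contains $\operatorname{id}_k$ if and only if $w'$ contains $0^j1^{k-j}$ as a subsequence for some $j \in \{0,1,\dots,k\}$.
   Context: For a binary word $w = w_1\cdots w_n$, let $A = \{i \in [n] : w_i = 0\}$ with $|A| = a$. The permutation $G(w)$ of $[n]$ (one-line notation) has as its first $a$ entries the elements of $A$ in increasing order, followed by the elements of $[n]\setminus A$ in increasing order. Every Grassmannian permutation (at most one descent) arises this way. A permutation $\sigma$ of $[n]$ contains a permutation $\pi$ of $[m]$ if there are indices $h(1)<\dots<h(m)$ with $\sigma_{h(i)}<\sigma_{h(j)}$ iff $\pi_i<\pi_j$; otherwise $\sigma$ avoids $\pi$. $0^j$ denotes $j$ consecutive zeros, and similarly $1^j$. *)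

theory Defs
  imports Main "HOL-Library.Sublist"
begin

text \<open>Binary words are lists over {0,1} (type nat list with all letters in {0,1}).
 Permutations of [n] are given in one-line notation as lists of naturals (values 1..n).\<close>

definition binary_word :: "nat list \<Rightarrow> bool" where
  "binary_word w \<longleftrightarrow> set w \<subseteq> {0, 1}"

definition G :: "nat list \<Rightarrow> nat list" where
  "G w = filter (\<lambda>i. w ! (i - 1) = 0) [1..<length w + 1]
       @ filter (\<lambda>i. w ! (i - 1) \<noteq> 0) [1..<length w + 1]"

definition contains_pattern :: "nat list \<Rightarrow> nat list \<Rightarrow> bool" where
  "contains_pattern \<sigma> \<pi> \<longleftrightarrow>
     (\<exists>h :: nat \<Rightarrow> nat.
        (\<forall>i j. i < j \<and> j < length \<pi> \<longrightarrow> h i < h j) \<and>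
        (\<forall>i < length \<pi>. h i < length \<sigma>) \<and>
        (\<forall>i < length \<pi>. \<forall>j < length \<pi>. (\<sigma> ! h i < \<sigma> ! h j) \<longleftrightarrow> (\<pi> ! i < \<pi> ! j)))"

definition id_perm :: "nat \<Rightarrow> nat list" where
  "id_perm k = [1..<k + 1]"

end

theory Submission
  imports Defs
begin

text \<open>An occurrence of a pattern \<pi> in \<sigma> amounts to a strictly increasing relabelling g of
  the values of \<pi> such that map g \<pi> is a subsequence of \<sigma>. Write G(w) = A @ B with A the
  positions of the zeros and B those of the ones, both increasing. A relabelling g comes from
  an embedding of w into w' exactly when map g A is a subsequence of A' and map g B one of B'.
  If G(w) is not the identity, the descent between the last element of A and the first of B
  cannot be absorbed by the increasing lists A' or B', so every occurrence of G(w) in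
  G(w') = A' @ B' splits exactly at the boundary between A and B. For the identity pattern an
  occurrence may split anywhere, say after j entries, and then it is an embedding of 0^j 1^(k-j).\<close>

lemma sorted_wrt_subseq:
  assumes "subseq xs ys" "sorted_wrt R ys"
  shows "sorted_wrt R xs"
  using assms by induction (auto dest: list_emb_set)

lemma sorted_wrt_append_last_hd:
  fixes xs ys :: "'a::order list"
  assumes "sorted_wrt (<) xs" "sorted_wrt (<) ys" "xs \<noteq> []" "ys \<noteq> []"
  shows "sorted_wrt (<) (xs @ ys) \<longleftrightarrow> last xs < hd ys"
proof -
  obtain xs' a ys' b where "xs = xs' @ [a]" "ys = b # ys'"
    using assms(3,4) by (metis rev_exhaust list.exhaust)
  then show ?thesis using assms(1,2) by (auto simp: sorted_wrt_append) (meson order.strict_trans)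
qed

lemma subseq_iff_map_nth:
  "subseq xs ys \<longleftrightarrow>
     (\<exists>ks. sorted_wrt (<) ks \<and> set ks \<subseteq> {..<length ys} \<and> xs = map ((!) ys) ks)"
proof
  assume "subseq xs ys"
  then show "\<exists>ks. sorted_wrt (<) ks \<and> set ks \<subseteq> {..<length ys} \<and> xs = map ((!) ys) ks"
  proof induction
    case (list_emb_Nil ys)
    show ?case by (intro exI[of _ "[]"]) simp
  next
    case (list_emb_Cons xs ys y)
    then obtain ks where "sorted_wrt (<) ks" "set ks \<subseteq> {..<length ys}" "xs = map ((!) ys) ks"
      by blast
    then show ?case by (intro exI[of _ "map Suc ks"]) (auto simp: sorted_wrt_map)
  next
    case (list_emb_Cons2 x y xs ys)
    then obtain ks where "sorted_wrt (<) ks" "set ks \<subseteq> {..<length ys}" "xs = map ((!) ys) ks"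
      by blast
    with \<open>x = y\<close> show ?case by (intro exI[of _ "0 # map Suc ks"]) (auto simp: sorted_wrt_map)
  qed
next
  assume "\<exists>ks. sorted_wrt (<) ks \<and> set ks \<subseteq> {..<length ys} \<and> xs = map ((!) ys) ks"
  then obtain ks where "sorted_wrt (<) ks" "set ks \<subseteq> {..<length ys}" "xs = map ((!) ys) ks"
    by blast
  moreover from this have "subseq ks [0..<length ys]"
    by (intro sorted_subset_imp_subseq) (auto simp: sorted_wrt_upt)
  ultimately show "subseq xs ys"
    using subseq_map[of "ks" "[0..<length ys]" "(!) ys"] by (simp add: map_nth)
qed

lemma subseq_append_iff_take_drop:
  "subseq xs (us @ vs) \<longleftrightarrow> (\<exists>j \<le> length xs. subseq (take j xs) us \<and> subseq (drop j xs) vs)"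
proof
  assume "subseq xs (us @ vs)"
  then obtain xs1 xs2 where "xs = xs1 @ xs2" "subseq xs1 us" "subseq xs2 vs"
    by (rule subseq_appendE)
  then show "\<exists>j \<le> length xs. subseq (take j xs) us \<and> subseq (drop j xs) vs"
    by (intro exI[of _ "length xs1"]) simp
next
  assume "\<exists>j \<le> length xs. subseq (take j xs) us \<and> subseq (drop j xs) vs"
  then show "subseq xs (us @ vs)"
    by (metis append_take_drop_id list_emb_append_mono)
qed

lemma subseq_append_split_at_descent:
  fixes xs ys :: "'a::linorder list"
  assumes "subseq (xs @ ys) (us @ vs)" "sorted_wrt (<) us" "sorted_wrt (<) vs"
    and "xs \<noteq> []" "ys \<noteq> []" "hd ys < last xs"
  shows "subseq xs us \<and> subseq ys vs"
proof -
  obtain zs1 zs2 where split: "xs @ ys = zs1 @ zs2" "subseq zs1 us" "subseq zs2 vs"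
    using assms(1) by (rule subseq_appendE)
  have sorted: "sorted_wrt (<) zs1" "sorted_wrt (<) zs2"
    using split(2,3) assms(2,3) by (auto intro: sorted_wrt_subseq)
  \<comment> \<open>the descent between last xs and hd ys cannot lie inside one of the sorted pieces\<close>
  obtain t where "xs = zs1 @ t \<and> t @ ys = zs2 \<or> xs @ t = zs1 \<and> ys = t @ zs2"
    using split(1) by (auto simp: append_eq_append_conv2)
  then have "xs = zs1 \<and> ys = zs2"
  proof (elim disjE conjE)
    assume "xs = zs1 @ t" "t @ ys = zs2"
    moreover have "t = []"
    proof (rule ccontr)
      assume "t \<noteq> []"
      moreover have "sorted_wrt (<) (t @ ys)" using sorted(2) \<open>t @ ys = zs2\<close> by simp
      ultimately have "last t < hd ys"
        using sorted_wrt_append_last_hd[of t ys] assms(5) by (simp add: sorted_wrt_append)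
      then show False using assms(6) \<open>xs = zs1 @ t\<close> \<open>t \<noteq> []\<close> by simp
    qed
    ultimately show ?thesis by simp
  next
    assume "xs @ t = zs1" "ys = t @ zs2"
    moreover have "t = []"
    proof (rule ccontr)
      assume "t \<noteq> []"
      moreover have "sorted_wrt (<) (xs @ t)" using sorted(1) \<open>xs @ t = zs1\<close> by simp
      ultimately have "last xs < hd t"
        using sorted_wrt_append_last_hd[of xs t] assms(4) by (simp add: sorted_wrt_append)
      then show False using assms(6) \<open>ys = t @ zs2\<close> \<open>t \<noteq> []\<close> by simp
    qed
    ultimately show ?thesis by simp
  qed
  then show ?thesis using split by simp
qed

lemma contains_pattern_iff_subseq_map:
  "contains_pattern \<sigma> \<pi> \<longleftrightarrow> (\<exists>g. strict_mono_on (set \<pi>) g \<and> subseq (map g \<pi>) \<sigma>)"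
proof
  assume "contains_pattern \<sigma> \<pi>"
  then obtain h where h_mono: "\<And>i j. i < j \<Longrightarrow> j < length \<pi> \<Longrightarrow> h i < h j"
    and h_bound: "\<And>i. i < length \<pi> \<Longrightarrow> h i < length \<sigma>"
    and h_order: "\<And>i j. i < length \<pi> \<Longrightarrow> j < length \<pi> \<Longrightarrow> \<sigma> ! h i < \<sigma> ! h j \<longleftrightarrow> \<pi> ! i < \<pi> ! j"
    unfolding contains_pattern_def by blast
  define g where "g v = \<sigma> ! h (SOME i. i < length \<pi> \<and> \<pi> ! i = v)" for v
  have g_nth: "g (\<pi> ! i) = \<sigma> ! h i" if i: "i < length \<pi>" for i
  proof -
    define i' where "i' = (SOME i'. i' < length \<pi> \<and> \<pi> ! i' = \<pi> ! i)"
    have "i' < length \<pi> \<and> \<pi> ! i' = \<pi> ! i"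
      unfolding i'_def by (rule someI[of _ i]) (use i in simp)
    then have i': "i' < length \<pi>" "\<pi> ! i' = \<pi> ! i" by auto
    \<comment> \<open>equal pattern values force equal images, so the choice of i' is irrelevant\<close>
    have "\<sigma> ! h i' = \<sigma> ! h i"
      using h_order[OF i'(1) i] h_order[OF i i'(1)] i'(2) by simp
    then show ?thesis by (simp add: g_def i'_def)
  qed
  have "strict_mono_on (set \<pi>) g"
  proof (rule strict_mono_onI)
    fix u v assume "u \<in> set \<pi>" "v \<in> set \<pi>" "u < v"
    then obtain i j where ij: "i < length \<pi>" "j < length \<pi>" "u = \<pi> ! i" "v = \<pi> ! j"
      by (auto simp: in_set_conv_nth)
    then have "\<sigma> ! h i < \<sigma> ! h j" using h_order[OF ij(1,2)] \<open>u < v\<close> by simp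
    then show "g u < g v" using g_nth ij by simp
  qed
  moreover have "subseq (map g \<pi>) \<sigma>"
    unfolding subseq_iff_map_nth
  proof (intro exI conjI)
    show "sorted_wrt (<) (map h [0..<length \<pi>])"
      unfolding sorted_wrt_iff_nth_less by (simp add: h_mono)
    show "set (map h [0..<length \<pi>]) \<subseteq> {..<length \<sigma>}"
      using h_bound by auto
    show "map g \<pi> = map ((!) \<sigma>) (map h [0..<length \<pi>])"
      by (rule nth_equalityI) (simp_all add: g_nth)
  qed
  ultimately show "\<exists>g. strict_mono_on (set \<pi>) g \<and> subseq (map g \<pi>) \<sigma>" by blast
next
  assume "\<exists>g. strict_mono_on (set \<pi>) g \<and> subseq (map g \<pi>) \<sigma>"
  then obtain g ks where g: "strict_mono_on (set \<pi>) g" and ks: "sorted_wrt (<) ks"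
    "set ks \<subseteq> {..<length \<sigma>}" "map g \<pi> = map ((!) \<sigma>) ks"
    unfolding subseq_iff_map_nth by blast
  have len: "length ks = length \<pi>"
    using arg_cong[OF ks(3), of length] by simp
  have nth: "\<sigma> ! (ks ! i) = g (\<pi> ! i)" if "i < length \<pi>" for i
    using arg_cong[OF ks(3), of "\<lambda>xs. xs ! i"] that len by simp
  show "contains_pattern \<sigma> \<pi>"
    unfolding contains_pattern_def
  proof (intro exI[of _ "(!) ks"] conjI allI impI)
    fix i j assume "i < j \<and> j < length \<pi>"
    then show "ks ! i < ks ! j" using ks(1) len by (auto simp: sorted_wrt_iff_nth_less)
  next
    fix i assume "i < length \<pi>"
    then have "ks ! i \<in> set ks" using len by simp
    then show "ks ! i < length \<sigma>" using ks(2) by blast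
  next
    fix i j assume "i < length \<pi>" "j < length \<pi>"
    then show "\<sigma> ! (ks ! i) < \<sigma> ! (ks ! j) \<longleftrightarrow> \<pi> ! i < \<pi> ! j"
      unfolding nth[OF \<open>i < length \<pi>\<close>] nth[OF \<open>j < length \<pi>\<close>]
      by (intro strict_mono_on_less[OF g]) simp_all
  qed
qed

definition positions :: "(nat \<Rightarrow> bool) \<Rightarrow> nat list \<Rightarrow> nat list" where
  "positions P w = filter (\<lambda>i. P (w ! (i - 1))) [1..<length w + 1]"

lemma G_eq_positions: "G w = positions (\<lambda>a. a = 0) w @ positions (\<lambda>a. a \<noteq> 0) w"
  by (simp add: G_def positions_def)

lemma set_positions: "set (positions P w) = {i \<in> {1..length w}. P (w ! (i - 1))}"
  by (auto simp: positions_def)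

lemma sorted_positions: "sorted_wrt (<) (positions P w)"
  unfolding positions_def by (intro sorted_wrt_filter sorted_wrt_upt)

lemma set_G: "set (G w) = {1..length w}"
  by (auto simp: G_eq_positions set_positions)

lemma binary_word_nth: "binary_word w \<Longrightarrow> i < length w \<Longrightarrow> w ! i = 0 \<or> w ! i = 1"
  unfolding binary_word_def using nth_mem by fastforce

lemma subseq_positions_map_nth:
  assumes "sorted_wrt (<) ks" "set ks \<subseteq> {..<length w'}" "w = map ((!) w') ks"
  shows "subseq (map (\<lambda>v. Suc (ks ! (v - 1))) (positions P w)) (positions P w')"
proof (rule sorted_subset_imp_subseq)
  have len: "length ks = length w" using assms(3) by simp
  show "set (map (\<lambda>v. Suc (ks ! (v - 1))) (positions P w)) \<subseteq> set (positions P w')"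
  proof
    fix u assume "u \<in> set (map (\<lambda>v. Suc (ks ! (v - 1))) (positions P w))"
    then obtain v where v: "v \<in> {1..length w}" "P (w ! (v - 1))" "u = Suc (ks ! (v - 1))"
      by (auto simp: set_positions)
    have v_ks: "v - 1 < length ks" using v len by auto
    then have "ks ! (v - 1) < length w'" using assms(2) nth_mem by blast
    moreover have "w' ! (ks ! (v - 1)) = w ! (v - 1)" using v_ks unfolding assms(3) by simp
    ultimately show "u \<in> set (positions P w')"
      using v by (simp add: set_positions)
  qed
  have "sorted_wrt (\<lambda>u v. ks ! (u - 1) < ks ! (v - 1)) (positions P w)"
  proof (rule sorted_wrt_mono_rel[OF _ sorted_positions])
    fix u v assume "u \<in> set (positions P w)" "v \<in> set (positions P w)" "u < v"
    then show "ks ! (u - 1) < ks ! (v - 1)"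
      using assms(1) len by (auto simp: set_positions sorted_wrt_iff_nth_less)
  qed
  then show "sorted_wrt (<) (map (\<lambda>v. Suc (ks ! (v - 1))) (positions P w))"
    by (simp add: sorted_wrt_map)
  show "sorted_wrt (\<le>) (positions P w')"
    using sorted_positions by (rule sorted_wrt_mono_rel[rotated]) simp
qed

text \<open>Here g sends the (1-based, as in G) position of each letter of w to the position of
  the letter of w' it is matched with.\<close>
lemma subseq_iff_block_embedding:
  assumes "binary_word w" "binary_word w'"
  shows "subseq w w' \<longleftrightarrow>
    (\<exists>g. strict_mono_on {1..length w} g \<and>
         subseq (map g (positions (\<lambda>a. a = 0) w)) (positions (\<lambda>a. a = 0) w') \<and>
         subseq (map g (positions (\<lambda>a. a \<noteq> 0) w)) (positions (\<lambda>a. a \<noteq> 0) w'))"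
    (is "_ \<longleftrightarrow> (\<exists>g. ?block g)")
proof
  assume "subseq w w'"
  then obtain ks where ks: "sorted_wrt (<) ks" "set ks \<subseteq> {..<length w'}" "w = map ((!) w') ks"
    unfolding subseq_iff_map_nth by blast
  have "strict_mono_on {1..length w} (\<lambda>v. Suc (ks ! (v - 1)))"
    using ks(1,3) by (auto intro!: strict_mono_onI simp: sorted_wrt_iff_nth_less)
  then show "\<exists>g. ?block g"
    using subseq_positions_map_nth[OF ks] by blast
next
  assume "\<exists>g. ?block g"
  then obtain g where g: "?block g" by blast
  have letter: "g v \<in> {1..length w'} \<and> w' ! (g v - 1) = w ! (v - 1)" if v: "v \<in> {1..length w}" for v
  proof -
    have image: "g v \<in> set (positions P w')"
      if "P (w ! (v - 1))" "subseq (map g (positions P w)) (positions P w')" for P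
      using that v list_emb_set[of "(=)" "map g (positions P w)"] by (fastforce simp: set_positions)
    show ?thesis
    proof (cases "w ! (v - 1) = 0")
      case True
      then show ?thesis using image[of "\<lambda>a. a = 0"] g by (auto simp: set_positions)
    next
      case False
      then have "g v \<in> {1..length w'}" "w' ! (g v - 1) \<noteq> 0"
        using image[of "\<lambda>a. a \<noteq> 0"] g by (auto simp: set_positions)
      then show ?thesis
        using False v binary_word_nth[OF assms(1), of "v - 1"] binary_word_nth[OF assms(2), of "g v - 1"]
        by auto
    qed
  qed
  show "subseq w w'"
    unfolding subseq_iff_map_nth
  proof (intro exI conjI)
    let ?ks = "map (\<lambda>v. g v - 1) [1..<length w + 1]"
    have "sorted_wrt (\<lambda>u v. g u - 1 < g v - 1) [1..<length w + 1]"
    proof (rule sorted_wrt_mono_rel[OF _ sorted_wrt_upt])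
      fix u v assume "u \<in> set [1..<length w + 1]" "v \<in> set [1..<length w + 1]" "u < v"
      then show "g u - 1 < g v - 1"
        using letter[of u] strict_mono_onD[of _ g u v] g by force
    qed
    then show "sorted_wrt (<) ?ks" by (simp add: sorted_wrt_map)
    show "set ?ks \<subseteq> {..<length w'}"
      using letter by force
    show "w = map ((!) w') ?ks"
    proof (rule nth_equalityI)
      fix i assume "i < length w"
      then show "w ! i = map ((!) w') ?ks ! i" using letter[of "Suc i"] by (simp del: upt_Suc)
    qed (simp del: upt_Suc)
  qed
qed

lemma G_descent_if_not_id_perm:
  assumes "G w \<noteq> id_perm (length w)"
  shows "positions (\<lambda>a. a = 0) w \<noteq> [] \<and> positions (\<lambda>a. a \<noteq> 0) w \<noteq> []
    \<and> hd (positions (\<lambda>a. a \<noteq> 0) w) < last (positions (\<lambda>a. a = 0) w)"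
    (is "?Z \<noteq> [] \<and> ?N \<noteq> [] \<and> hd ?N < last ?Z")
proof (rule ccontr)
  assume no_descent: "\<not> ?thesis"
  have "sorted_wrt (<) (?Z @ ?N)"
  proof (cases "?Z = [] \<or> ?N = []")
    case False
    then have "last ?Z \<in> set ?Z" "hd ?N \<in> set ?N" by simp_all
    then have "last ?Z \<noteq> hd ?N" by (auto simp: set_positions)
    then have "last ?Z < hd ?N" using no_descent False by auto
    then show ?thesis using False sorted_wrt_append_last_hd sorted_positions by blast
  qed (auto simp: sorted_positions)
  then have "G w = [1..<length w + 1]"
    unfolding G_eq_positions[symmetric]
    by (metis set_G atLeastLessThanSuc_atLeastAtMost set_upt sorted_wrt_upt
        strict_sorted_iff sorted_distinct_set_unique Suc_eq_plus1)
  then show False using assms by (simp add: id_perm_def)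
qed

lemma positions_replicate:
  assumes "j \<le> k"
  shows "positions (\<lambda>a. a = 0) (replicate j 0 @ replicate (k - j) 1) = [1..<j + 1]"
    and "positions (\<lambda>a. a \<noteq> 0) (replicate j 0 @ replicate (k - j) 1) = [j + 1..<k + 1]"
proof -
  have split: "[1..<k + 1] = [1..<j + 1] @ [j + 1..<k + 1]"
    using assms upt_add_eq_append[of 1 "j + 1" "k - j"] by simp
  have "positions P (replicate j 0 @ replicate (k - j) 1)
      = filter (\<lambda>i. P (if i \<le> j then 0 else 1)) [1..<j + 1]
        @ filter (\<lambda>i. P (if i \<le> j then 0 else 1)) [j + 1..<k + 1]" for P
  proof -
    have "positions P (replicate j 0 @ replicate (k - j) 1)
        = filter (\<lambda>i. P (if i \<le> j then 0 else 1)) [1..<k + 1]"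
      unfolding positions_def using assms by (intro filter_cong) (auto simp: nth_append)
    then show ?thesis unfolding split by simp
  qed
  then show "positions (\<lambda>a. a = 0) (replicate j 0 @ replicate (k - j) 1) = [1..<j + 1]"
      "positions (\<lambda>a. a \<noteq> 0) (replicate j 0 @ replicate (k - j) 1) = [j + 1..<k + 1]"
    by (simp_all add: filter_True filter_False del: upt_Suc)
qed

lemma contains_G_iff_subseq:
  assumes "binary_word w" "binary_word w'" "G w \<noteq> id_perm (length w)"
  shows "contains_pattern (G w') (G w) \<longleftrightarrow> subseq w w'"
proof -
  let ?Z = "positions (\<lambda>a. a = 0)" and ?N = "positions (\<lambda>a. a \<noteq> 0)"
  have blocks: "subseq (map g (?Z w) @ map g (?N w)) (?Z w' @ ?N w')
      \<longleftrightarrow> subseq (map g (?Z w)) (?Z w') \<and> subseq (map g (?N w)) (?N w')"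
    if g: "strict_mono_on {1..length w} g" for g
  proof
    obtain descent: "?Z w \<noteq> []" "?N w \<noteq> []" "hd (?N w) < last (?Z w)"
      using G_descent_if_not_id_perm[OF assms(3)] by blast
    then have "hd (?N w) \<in> set (?N w)" "last (?Z w) \<in> set (?Z w)" by simp_all
    then have "hd (?N w) \<in> {1..length w}" "last (?Z w) \<in> {1..length w}"
      by (auto simp: set_positions)
    then have "hd (map g (?N w)) < last (map g (?Z w))"
      using descent strict_mono_onD[OF g] by (simp add: hd_map last_map)
    then show "subseq (map g (?Z w)) (?Z w') \<and> subseq (map g (?N w)) (?N w')"
      if "subseq (map g (?Z w) @ map g (?N w)) (?Z w' @ ?N w')"
      using subseq_append_split_at_descent[OF that sorted_positions sorted_positions] descent
      by simp
  qed (simp add: list_emb_append_mono)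
  have "contains_pattern (G w') (G w) \<longleftrightarrow>
      (\<exists>g. strict_mono_on {1..length w} g \<and> subseq (map g (?Z w) @ map g (?N w)) (?Z w' @ ?N w'))"
    unfolding contains_pattern_iff_subseq_map set_G by (simp add: G_eq_positions)
  also have "\<dots> \<longleftrightarrow> subseq w w'"
    using blocks subseq_iff_block_embedding[OF assms(1,2)] by blast
  finally show ?thesis .
qed

lemma contains_id_perm_iff:
  assumes "binary_word w'"
  shows "contains_pattern (G w') (id_perm k) \<longleftrightarrow>
    (\<exists>j \<le> k. subseq (replicate j 0 @ replicate (k - j) 1) w')"
proof -
  let ?Z = "positions (\<lambda>a. a = 0)" and ?N = "positions (\<lambda>a. a \<noteq> 0)"
  have set_id_perm: "set (id_perm k) = {1..k}" by (auto simp: id_perm_def)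
  have "contains_pattern (G w') (id_perm k) \<longleftrightarrow>
      (\<exists>g. strict_mono_on {1..k} g \<and> subseq (map g [1..<k + 1]) (?Z w' @ ?N w'))"
    unfolding contains_pattern_iff_subseq_map G_eq_positions set_id_perm
    unfolding id_perm_def ..
  also have "\<dots> \<longleftrightarrow> (\<exists>j \<le> k. \<exists>g. strict_mono_on {1..k} g \<and>
      subseq (map g [1..<j + 1]) (?Z w') \<and> subseq (map g [j + 1..<k + 1]) (?N w'))"
  proof -
    have "take j [1..<k + 1] = [1..<j + 1]" "drop j [1..<k + 1] = [j + 1..<k + 1]" if "j \<le> k" for j
      using that by (simp_all add: take_upt del: upt_Suc)
    then have "subseq (map g [1..<k + 1]) (?Z w' @ ?N w') \<longleftrightarrow> (\<exists>j \<le> k.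
        subseq (map g [1..<j + 1]) (?Z w') \<and> subseq (map g [j + 1..<k + 1]) (?N w'))" for g
      unfolding subseq_append_iff_take_drop by (auto simp: take_map drop_map simp del: upt_Suc)
    then show ?thesis by blast
  qed
  also have "\<dots> \<longleftrightarrow> (\<exists>j \<le> k. subseq (replicate j 0 @ replicate (k - j) 1) w')"
  proof (intro ex_cong1 conj_cong refl)
    fix j assume "j \<le> k"
    let ?u = "replicate j 0 @ replicate (k - j) (1::nat)"
    have "binary_word ?u" by (auto simp: binary_word_def)
    then have "subseq ?u w' \<longleftrightarrow> (\<exists>g. strict_mono_on {1..length ?u} g \<and>
        subseq (map g (?Z ?u)) (?Z w') \<and> subseq (map g (?N ?u)) (?N w'))"
      by (rule subseq_iff_block_embedding[OF _ assms])
    moreover have "length ?u = k" using \<open>j \<le> k\<close> by simp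
    ultimately show "(\<exists>g. strict_mono_on {1..k} g \<and>
        subseq (map g [1..<j + 1]) (?Z w') \<and> subseq (map g [j + 1..<k + 1]) (?N w'))
      \<longleftrightarrow> subseq ?u w'"
      unfolding positions_replicate[OF \<open>j \<le> k\<close>] by simp
  qed
  finally show ?thesis .
qed

theorem mainTheorem2:
  fixes w w' :: "nat list"
  assumes "binary_word w" and "binary_word w'"
  shows "(G w \<noteq> id_perm (length w) \<longrightarrow>
            (contains_pattern (G w') (G w) \<longleftrightarrow> subseq w w'))
       \<and> (\<forall>k. G w = id_perm k \<longrightarrow>
            (contains_pattern (G w') (id_perm k) \<longleftrightarrow>
               (\<exists>j \<le> k. subseq (replicate j 0 @ replicate (k - j) 1) w')))"
  using contains_G_iff_subseq[OF assms] contains_id_perm_iff[OF assms(2)] by blast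

end
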